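(* Under the full-support assumption, the constant $C_{\bm P}$ is strictly positive; more precisely, there is a constant $c>0$ depending only on $\bm P$ such that $\|\bm P{\bm\pi}\|_\infty\ge c\,\|{\bm\pi}-p({\bm\pi})\|_1$ for every ${\bm\pi}\in\Delta(\mathbb{A})$ with all entries positive.
   Context: $\mathbb{A}$ is a finite set, $\Delta(\mathbb{A})$ the probability simplex, $\bm P\in\mathbb{R}^{\mathbb{A}\times\mathbb{A}}$ skew-symmetric. $\mathbb{M}$ is the set of Nash equilibria: ${\bm\pi}\in\Delta(\mathbb{A})$ with $\max_a(\bm P{\bm\pi})_a\le 0$. Full-support assumption: for every $a$ there exists ${\bm\pi}\in\mathbb{M}$ with $\pi_a>0$. For ${\bm\pi}$ with positive entries, $p({\bm\pi})=\arg\min_{{\bm\pi}'\in\mathbb{M}}D_{\mathrm{KL}}({\bm\pi}'\|{\bm\pi})$ (unique). $C_{\bm P}=\inf\{\|\bm P{\bm\pi}\|_\infty/\|{\bm\pi}-p({\bm\pi})\|_1:\ {\bm\pi}\in\Delta(\mathbb{A})\setminus\mathbb{M},\ \pi_a>0\ \forall a\}$. *)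

theory Defs
  imports "HOL-Analysis.Analysis"
begin

definition prob_simplex :: "('a::finite \<Rightarrow> real) set" where
  "prob_simplex = {x. (\<forall>a. 0 \<le> x a) \<and> (\<Sum>a\<in>UNIV. x a) = 1}"

definition skew_symmetric :: "('a \<Rightarrow> 'a \<Rightarrow> real) \<Rightarrow> bool" where
  "skew_symmetric P \<longleftrightarrow> (\<forall>a b. P a b = - P b a)"

definition mat_vec :: "('a \<Rightarrow> 'a::finite \<Rightarrow> real) \<Rightarrow> ('a \<Rightarrow> real) \<Rightarrow> ('a \<Rightarrow> real)" where
  "mat_vec P x = (\<lambda>a. \<Sum>b\<in>UNIV. P a b * x b)"

definition norm_inf :: "('a::finite \<Rightarrow> real) \<Rightarrow> real" where
  "norm_inf v = Max (range (\<lambda>a. \<bar>v a\<bar>))"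

definition norm_one :: "('a::finite \<Rightarrow> real) \<Rightarrow> real" where
  "norm_one v = (\<Sum>a\<in>UNIV. \<bar>v a\<bar>)"

definition nash_set :: "('a \<Rightarrow> 'a::finite \<Rightarrow> real) \<Rightarrow> ('a \<Rightarrow> real) set" where
  "nash_set P = {x \<in> prob_simplex. Max (range (mat_vec P x)) \<le> 0}"

definition KL :: "('a::finite \<Rightarrow> real) \<Rightarrow> ('a \<Rightarrow> real) \<Rightarrow> real" where
  "KL x' x = (\<Sum>a\<in>UNIV. if x' a = 0 then 0 else x' a * ln (x' a / x a))"

text \<open>KL projection onto the Nash set (the unique minimiser).\<close>
definition kl_proj :: "('a \<Rightarrow> 'a::finite \<Rightarrow> real) \<Rightarrow> ('a \<Rightarrow> real) \<Rightarrow> ('a \<Rightarrow> real)" where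
  "kl_proj P x = (THE \<mu>. \<mu> \<in> nash_set P \<and> (\<forall>\<nu>\<in>nash_set P. KL \<mu> x \<le> KL \<nu> x))"

definition full_support :: "('a \<Rightarrow> 'a::finite \<Rightarrow> real) \<Rightarrow> bool" where
  "full_support P \<longleftrightarrow> (\<forall>a. \<exists>x\<in>nash_set P. x a > 0)"

definition C_const :: "('a \<Rightarrow> 'a::finite \<Rightarrow> real) \<Rightarrow> real" where
  "C_const P = Inf {norm_inf (mat_vec P x) / norm_one (\<lambda>a. x a - kl_proj P x a) | x.
      x \<in> prob_simplex - nash_set P \<and> (\<forall>a. x a > 0)}"

end

theory Submission
  imports Defs "HOL-Real_Asymp.Real_Asymp"
begin

text \<open>Pairing a fully supported equilibrium with \<open>P x\<close> via skew-symmetry shows that the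
  equilibria are exactly the points of the simplex with \<open>P x = 0\<close>. Two Hoffman-type error
  bounds then give the theorem. First, every \<open>x\<close> in the simplex lies within \<open>C |P x|_inf\<close>
  of this polytope: subtract a small preimage of \<open>P x\<close>, add a multiple of a strictly positive
  equilibrium to restore nonnegativity, and renormalize. Second, the KL projection \<open>p\<close> of a
  positive \<open>x\<close> admits no nonzero direction \<open>c\<close> with \<open>sum c = 0\<close> and \<open>P c = 0\<close> whose signs
  agree with those of \<open>p - x\<close> on its support, since moving \<open>p\<close> against \<open>c\<close> would decrease
  \<open>KL(. || x)\<close>; and in any linear space \<open>V\<close>, a vector \<open>d \<in> V\<close> such that \<open>d - e\<close> admits no such
  sign-conformal direction in \<open>V\<close> satisfies \<open>|d|_1 \<le> C' |e|_1\<close> (induction on the number of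
  coordinates not vanishing identically on \<open>V\<close>). Taking \<open>d = p - q\<close> and \<open>e = x - q\<close>, with \<open>q\<close>
  the nearby equilibrium from the first bound, gives \<open>|x - p|_1 \<le> (1 + C') C |P x|_inf\<close>.\<close>

lemma mat_vec_add: "mat_vec P (\<lambda>b. x b + y b) a = mat_vec P x a + mat_vec P y a"
  by (simp add: mat_vec_def sum.distrib algebra_simps)

lemma mat_vec_diff: "mat_vec P (\<lambda>b. x b - y b) a = mat_vec P x a - mat_vec P y a"
  by (simp add: mat_vec_def sum_subtractf algebra_simps)

lemma mat_vec_scale: "mat_vec P (\<lambda>b. t * x b) a = t * mat_vec P x a"
  by (simp add: mat_vec_def sum_distrib_left algebra_simps)

lemma mat_vec_divide: "mat_vec P (\<lambda>b. x b / t) a = mat_vec P x a / t"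
  by (simp add: mat_vec_def sum_divide_distrib algebra_simps)

lemma mat_vec_eq_matrix_vector_mult:
  "mat_vec P s a = ((\<chi> i j. P i j) *v (\<chi> j. s j)) $ a"
  by (simp add: mat_vec_def matrix_vector_mult_def)

lemma skew_symmetric_pairing:
  assumes "skew_symmetric P"
  shows "(\<Sum>b\<in>UNIV. y b * mat_vec P z b) = - (\<Sum>b\<in>UNIV. z b * mat_vec P y b)"
proof -
  have "(\<Sum>b\<in>UNIV. y b * mat_vec P z b) = (\<Sum>b\<in>UNIV. \<Sum>c\<in>UNIV. y b * P b c * z c)"
    by (simp add: mat_vec_def sum_distrib_left mult.assoc)
  also have "\<dots> = (\<Sum>c\<in>UNIV. \<Sum>b\<in>UNIV. y b * P b c * z c)"
    by (rule sum.swap)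
  also have "\<dots> = (\<Sum>c\<in>UNIV. \<Sum>b\<in>UNIV. - (z c * P c b * y b))"
  proof (intro sum.cong refl)
    fix c b
    have "P b c = - P c b" using assms unfolding skew_symmetric_def by blast
    then show "y b * P b c * z c = - (z c * P c b * y b)" by simp
  qed
  also have "\<dots> = - (\<Sum>b\<in>UNIV. z b * mat_vec P y b)"
    by (simp add: mat_vec_def sum_distrib_left mult.assoc sum_negf)
  finally show ?thesis .
qed

lemma norm_one_nonneg: "0 \<le> norm_one v"
  by (simp add: norm_one_def sum_nonneg)

lemma norm_one_add_le: "norm_one (\<lambda>b. f b + g b) \<le> norm_one f + norm_one g"
  unfolding norm_one_def by (simp add: sum.distrib[symmetric] sum_mono abs_triangle_ineq)

lemma norm_one_diff_le: "norm_one (\<lambda>b. f b - g b) \<le> norm_one f + norm_one g"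
  unfolding norm_one_def by (simp add: sum.distrib[symmetric] sum_mono abs_triangle_ineq4)

lemma norm_one_scale: "norm_one (\<lambda>b. t * f b) = \<bar>t\<bar> * norm_one f"
  unfolding norm_one_def by (simp add: abs_mult sum_distrib_left)

lemma abs_le_norm_one: "\<bar>f a\<bar> \<le> norm_one f"
  unfolding norm_one_def by (rule member_le_sum) auto

lemma abs_le_norm_inf: "\<bar>v a\<bar> \<le> norm_inf v"
  unfolding norm_inf_def by (rule Max_ge) auto

lemma norm_inf_nonneg: "0 \<le> norm_inf v"
  using abs_le_norm_inf[of v undefined] by linarith

lemma norm_one_le_card_norm_inf: "norm_one (v::'a::finite \<Rightarrow> real) \<le> CARD('a) * norm_inf v"
  unfolding norm_one_def using sum_mono[of UNIV "\<lambda>a. \<bar>v a\<bar>" "\<lambda>_. norm_inf v"] abs_le_norm_inf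
  by auto

lemma norm_one_le_card_norm: "norm_one (\<lambda>a. v $ a) \<le> CARD('a) * norm (v::real^'a)"
  unfolding norm_one_def using sum_mono[of UNIV "\<lambda>a. \<bar>v $ a\<bar>" "\<lambda>_. norm v"] component_le_norm_cart
  by auto

lemma norm_le_norm_one: "norm (\<chi> a. v a) \<le> norm_one v"
  using norm_le_l1_cart[of "\<chi> a. v a"] by (simp add: norm_one_def)

section \<open>Equilibria of a skew-symmetric game\<close>

definition kernel_simplex :: "('a \<Rightarrow> 'a::finite \<Rightarrow> real) \<Rightarrow> ('a \<Rightarrow> real) set" where
  "kernel_simplex P = {x \<in> prob_simplex. \<forall>b. mat_vec P x b = 0}"

lemma nash_set_mat_vec_nonpos:
  assumes "x \<in> nash_set P"
  shows "mat_vec P x b \<le> 0"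
proof -
  have "mat_vec P x b \<le> Max (range (mat_vec P x))" by (rule Max_ge) auto
  also have "\<dots> \<le> 0" using assms by (simp add: nash_set_def)
  finally show ?thesis .
qed

lemma full_support_positive_equilibrium:
  fixes P :: "'a::finite \<Rightarrow> 'a \<Rightarrow> real"
  assumes "full_support P"
  obtains \<pi> where "\<pi> \<in> nash_set P" "\<And>a. 0 < \<pi> a"
proof -
  from assms obtain w where w: "\<And>a. w a \<in> nash_set P" "\<And>a. 0 < w a a"
    unfolding full_support_def by metis
  have w_simplex: "\<And>a b. 0 \<le> w a b" "\<And>a. (\<Sum>b\<in>UNIV. w a b) = 1"
    using w(1) by (auto simp: nash_set_def prob_simplex_def)
  define n where "n = real CARD('a)"
  have "0 < n" by (simp add: n_def)
  define \<pi> where "\<pi> = (\<lambda>b. (\<Sum>a\<in>UNIV. w a b) / n)"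
  have pos: "0 < \<pi> b" for b
  proof -
    have "w b b \<le> (\<Sum>a\<in>UNIV. w a b)" by (rule member_le_sum) (auto simp: w_simplex)
    then show ?thesis using w(2)[of b] \<open>0 < n\<close> unfolding \<pi>_def by simp
  qed
  have "(\<Sum>b\<in>UNIV. \<pi> b) = (\<Sum>b\<in>UNIV. \<Sum>a\<in>UNIV. w a b) / n"
    unfolding \<pi>_def by (simp add: sum_divide_distrib)
  also have "\<dots> = (\<Sum>a\<in>UNIV. \<Sum>b\<in>UNIV. w a b) / n"
    by (subst sum.swap) (rule refl)
  finally have "\<pi> \<in> prob_simplex"
    using pos \<open>0 < n\<close> by (simp add: prob_simplex_def w_simplex n_def less_imp_le)
  moreover have "mat_vec P \<pi> b \<le> 0" for b
  proof -
    have "mat_vec P \<pi> b = (\<Sum>c\<in>UNIV. \<Sum>a\<in>UNIV. P b c * w a c) / n"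
      unfolding \<pi>_def mat_vec_def by (simp add: sum_divide_distrib sum_distrib_left)
    also have "\<dots> = (\<Sum>a\<in>UNIV. mat_vec P (w a) b) / n"
      unfolding mat_vec_def by (subst sum.swap) (rule refl)
    finally show ?thesis
      using \<open>0 < n\<close> nash_set_mat_vec_nonpos[OF w(1)] by (simp add: divide_nonpos_pos sum_nonpos)
  qed
  ultimately have "\<pi> \<in> nash_set P" by (simp add: nash_set_def Max_le_iff)
  then show thesis using pos by (rule that)
qed

lemma nash_set_eq_kernel_simplex:
  fixes P :: "'a::finite \<Rightarrow> 'a \<Rightarrow> real"
  assumes skew: "skew_symmetric P" and "full_support P"
  shows "nash_set P = kernel_simplex P"
proof -
  obtain \<pi> where "\<pi> \<in> nash_set P" and \<pi>_pos: "\<And>a. 0 < \<pi> a"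
    using full_support_positive_equilibrium[OF \<open>full_support P\<close>] by blast
  have vanish: "f b = 0" if "\<And>b. f b \<le> 0" "(\<Sum>b\<in>UNIV. \<pi> b * f b) = 0" for f :: "'a \<Rightarrow> real" and b
  proof -
    have "\<forall>b\<in>UNIV. - (\<pi> b * f b) = 0"
      using that \<pi>_pos sum_nonneg_eq_0_iff[of UNIV "\<lambda>b. - (\<pi> b * f b)"]
      by (simp add: sum_negf mult_nonneg_nonpos less_imp_le)
    then show ?thesis using \<pi>_pos[of b] by force
  qed
  have "(\<Sum>b\<in>UNIV. \<pi> b * mat_vec P \<pi> b) = 0"
    using skew_symmetric_pairing[OF skew, of \<pi> \<pi>] by linarith
  then have P\<pi>: "mat_vec P \<pi> b = 0" for b
    using vanish nash_set_mat_vec_nonpos[OF \<open>\<pi> \<in> nash_set P\<close>] by blast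
  show ?thesis
  proof (intro set_eqI iffI)
    fix x assume x: "x \<in> nash_set P"
    have "(\<Sum>b\<in>UNIV. \<pi> b * mat_vec P x b) = 0"
      using skew_symmetric_pairing[OF skew, of \<pi> x] P\<pi> by simp
    then have "mat_vec P x b = 0" for b
      using vanish nash_set_mat_vec_nonpos[OF x] by blast
    then show "x \<in> kernel_simplex P" using x by (simp add: nash_set_def kernel_simplex_def)
  next
    fix x assume "x \<in> kernel_simplex P"
    then show "x \<in> nash_set P" by (simp add: nash_set_def kernel_simplex_def Max_le_iff)
  qed
qed

section \<open>The KL projection onto the equilibria\<close>

definition kl_term :: "real \<Rightarrow> real \<Rightarrow> real" where
  "kl_term x t = (if t = 0 then 0 else t * ln (t / x))"

lemma KL_eq_sum_kl_term: "KL y x = (\<Sum>a\<in>UNIV. kl_term (x a) (y a))"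
  by (simp add: KL_def kl_term_def)

lemma kl_term_gt_tangent:
  assumes "0 \<le> y" "0 < z" "0 < x" "y \<noteq> z"
  shows "kl_term x y - kl_term x z > (1 + ln (z / x)) * (y - z)"
proof (cases "y = 0")
  case True
  then show ?thesis using assms by (simp add: kl_term_def algebra_simps)
next
  case False
  then have "0 < y" using assms by simp
  have "ln (z / y) < z / y - 1"
    using ln_le_minus_one[of "z / y"] ln_eq_minus_one[of "z / y"] \<open>0 < y\<close> assms by fastforce
  then have "y - z < y * ln (y / z)"
    using \<open>0 < y\<close> assms by (simp add: ln_div field_simps)
  moreover have "kl_term x y - kl_term x z - (1 + ln (z / x)) * (y - z) = y * ln (y / z) - (y - z)"
    using \<open>0 < y\<close> assms by (simp add: kl_term_def ln_div algebra_simps)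
  ultimately show ?thesis by simp
qed

lemma continuous_on_kl_term:
  assumes "0 < x"
  shows "continuous_on {0..} (kl_term x)"
proof -
  have "kl_term x = (\<lambda>t. t * ln (t / x))" by (auto simp: kl_term_def fun_eq_iff)
  moreover have "continuous (at t within {0..}) (\<lambda>t. t * ln (t / x))" if "0 \<le> t" for t
  proof (cases "t = 0")
    case True
    have "((\<lambda>t. t * ln (t / x)) \<longlongrightarrow> 0) (at_right 0)"
      using assms by real_asymp
    then show ?thesis using True by (simp add: continuous_within at_within_Ici_at_right)
  next
    case False
    with that have "0 < t" by simp
    then have "isCont (\<lambda>t. t * ln (t / x)) t" using assms by (auto intro!: continuous_intros)
    then show ?thesis by (rule continuous_at_imp_continuous_at_within)
  qed
  ultimately show ?thesis by (simp add: continuous_on_eq_continuous_within)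
qed

lemma compact_simplex_kernel_cart:
  fixes M :: "real^'a^'b"
  shows "compact {v :: real^'a. (\<forall>a. 0 \<le> v $ a) \<and> (\<Sum>a\<in>UNIV. v $ a) = 1 \<and> M *v v = 0}"
    (is "compact ?S")
proof -
  have "closed ?S"
    by (intro closed_Collect_conj closed_Collect_all closed_Collect_le closed_Collect_eq
        continuous_on_component continuous_on_sum continuous_on_const continuous_on_id
        matrix_vector_mult_linear_continuous_on)
  moreover have "bounded ?S"
    unfolding bounded_iff
  proof (intro exI[of _ 1] ballI)
    fix v assume "v \<in> ?S"
    then show "norm v \<le> 1" using norm_le_l1_cart[of v] by simp
  qed
  ultimately show ?thesis by (simp add: compact_eq_bounded_closed)
qed

lemma KL_argmin_exists:
  fixes P :: "'a::finite \<Rightarrow> 'a \<Rightarrow> real"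
  assumes "kernel_simplex P \<noteq> {}" "\<forall>a. 0 < x a"
  shows "\<exists>p\<in>kernel_simplex P. \<forall>\<nu>\<in>kernel_simplex P. KL p x \<le> KL \<nu> x"
proof -
  define M where "M = (\<chi> i j. P i j :: real^'a^'a)"
  define S where "S = {v :: real^'a. (\<forall>a. 0 \<le> v $ a) \<and> (\<Sum>a\<in>UNIV. v $ a) = 1 \<and> M *v v = 0}"
  have S_iff: "v \<in> S \<longleftrightarrow> (\<lambda>a. v $ a) \<in> kernel_simplex P" for v
    by (simp add: S_def kernel_simplex_def prob_simplex_def mat_vec_eq_matrix_vector_mult M_def vec_eq_iff)
  have "compact S" unfolding S_def by (rule compact_simplex_kernel_cart)
  obtain \<pi> where "\<pi> \<in> kernel_simplex P" using assms(1) by blast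
  then have "vec_lambda \<pi> \<in> S" by (simp add: S_iff)
  have "continuous_on S (\<lambda>v. kl_term (x a) (v $ a))" for a
    using continuous_on_kl_term[of "x a"] assms(2)
    by (intro continuous_on_compose2[of "{0..}" "kl_term (x a)" S "\<lambda>v. v $ a"])
      (auto simp: S_def intro: continuous_on_component continuous_on_id)
  then have "continuous_on S (\<lambda>v. KL (\<lambda>a. v $ a) x)"
    unfolding KL_eq_sum_kl_term by (intro continuous_on_sum) auto
  then obtain v where v: "v \<in> S" "\<And>w. w \<in> S \<Longrightarrow> KL (\<lambda>a. v $ a) x \<le> KL (\<lambda>a. w $ a) x"
    using continuous_attains_inf[OF \<open>compact S\<close>] \<open>vec_lambda \<pi> \<in> S\<close> by (metis empty_iff)
  show ?thesis
  proof (intro bexI ballI)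
    show "(\<lambda>a. v $ a) \<in> kernel_simplex P" using v(1) S_iff by blast
    fix \<nu> assume "\<nu> \<in> kernel_simplex P"
    then have "vec_lambda \<nu> \<in> S" by (simp add: S_iff)
    then show "KL (\<lambda>a. v $ a) x \<le> KL \<nu> x" using v(2)[of "vec_lambda \<nu>"] by simp
  qed
qed

lemma kernel_simplex_midpoint:
  assumes "p \<in> kernel_simplex P" "q \<in> kernel_simplex P"
  shows "(\<lambda>b. (p b + q b) / 2) \<in> kernel_simplex P"
  using assms
  by (auto simp: kernel_simplex_def prob_simplex_def mat_vec_divide mat_vec_add
      sum.distrib sum_divide_distrib[symmetric])

lemma KL_argmin_unique:
  assumes "\<forall>a. 0 < x a"
    and "p \<in> kernel_simplex P" "\<forall>\<nu>\<in>kernel_simplex P. KL p x \<le> KL \<nu> x"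
    and "q \<in> kernel_simplex P" "\<forall>\<nu>\<in>kernel_simplex P. KL q x \<le> KL \<nu> x"
  shows "p = q"
proof (rule ccontr)
  assume "p \<noteq> q"
  then obtain b0 where "p b0 \<noteq> q b0" by (auto simp: fun_eq_iff)
  define m where "m = (\<lambda>b. (p b + q b) / 2)"
  have "m \<in> kernel_simplex P" unfolding m_def using assms(2,4) by (rule kernel_simplex_midpoint)
  have p0: "0 \<le> p b" and q0: "0 \<le> q b" for b
    using assms by (auto simp: kernel_simplex_def prob_simplex_def)
  have gap: "kl_term (x b) (p b) + kl_term (x b) (q b) - 2 * kl_term (x b) (m b) > 0"
    if "p b \<noteq> q b" for b
  proof -
    have "0 < m b" "p b \<noteq> m b" "q b \<noteq> m b" using p0[of b] q0[of b] that by (auto simp: m_def)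
    then have "kl_term (x b) (p b) - kl_term (x b) (m b) > (1 + ln (m b / x b)) * (p b - m b)"
      and "kl_term (x b) (q b) - kl_term (x b) (m b) > (1 + ln (m b / x b)) * (q b - m b)"
      using kl_term_gt_tangent p0 q0 assms(1) by auto
    moreover have "(1 + ln (m b / x b)) * (p b - m b) + (1 + ln (m b / x b)) * (q b - m b) = 0"
      by (simp add: m_def algebra_simps)
    ultimately show ?thesis by linarith
  qed
  have "0 < (\<Sum>b\<in>UNIV. kl_term (x b) (p b) + kl_term (x b) (q b) - 2 * kl_term (x b) (m b))"
  proof (rule sum_pos2[of UNIV b0])
    show "0 \<le> kl_term (x b) (p b) + kl_term (x b) (q b) - 2 * kl_term (x b) (m b)" for b
      using gap[of b] by (cases "p b = q b") (auto simp: m_def)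
  qed (use gap \<open>p b0 \<noteq> q b0\<close> in auto)
  then have "2 * KL m x < KL p x + KL q x"
    by (simp add: KL_eq_sum_kl_term sum_subtractf sum.distrib sum_distrib_left)
  moreover have "KL p x \<le> KL m x" "KL q x \<le> KL m x"
    using assms \<open>m \<in> kernel_simplex P\<close> by auto
  ultimately show False by linarith
qed

lemma kl_proj_argmin:
  fixes P :: "'a::finite \<Rightarrow> 'a \<Rightarrow> real"
  assumes "skew_symmetric P" "full_support P" "\<forall>a. 0 < x a"
  shows "kl_proj P x \<in> kernel_simplex P"
    and "\<forall>\<nu>\<in>kernel_simplex P. KL (kl_proj P x) x \<le> KL \<nu> x"
proof -
  have eq: "nash_set P = kernel_simplex P"
    using assms(1,2) by (rule nash_set_eq_kernel_simplex)
  obtain \<pi> where "\<pi> \<in> nash_set P"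
    using full_support_positive_equilibrium[OF assms(2)] by blast
  then have "kernel_simplex P \<noteq> {}" using eq by blast
  then obtain p where "p \<in> kernel_simplex P" "\<forall>\<nu>\<in>kernel_simplex P. KL p x \<le> KL \<nu> x"
    using KL_argmin_exists assms(3) by blast
  then have "\<exists>!p. p \<in> kernel_simplex P \<and> (\<forall>\<nu>\<in>kernel_simplex P. KL p x \<le> KL \<nu> x)"
    using KL_argmin_unique[OF assms(3)] by blast
  then have "kl_proj P x \<in> kernel_simplex P \<and> (\<forall>\<nu>\<in>kernel_simplex P. KL (kl_proj P x) x \<le> KL \<nu> x)"
    unfolding kl_proj_def eq by (rule theI')
  then show "kl_proj P x \<in> kernel_simplex P" "\<forall>\<nu>\<in>kernel_simplex P. KL (kl_proj P x) x \<le> KL \<nu> x"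
    by auto
qed

section \<open>First-order optimality of the KL projection\<close>

definition sign_conformal :: "('a \<Rightarrow> real) \<Rightarrow> ('a \<Rightarrow> real) \<Rightarrow> bool" where
  "sign_conformal c s \<longleftrightarrow> (\<forall>b. c b \<noteq> 0 \<longrightarrow> 0 < c b * s b)"

definition conformal_free :: "('a \<Rightarrow> real) set \<Rightarrow> ('a \<Rightarrow> real) \<Rightarrow> bool" where
  "conformal_free V s \<longleftrightarrow> (\<forall>c\<in>V. sign_conformal c s \<longrightarrow> (\<forall>b. c b = 0))"

definition kernel_directions :: "('a \<Rightarrow> 'a::finite \<Rightarrow> real) \<Rightarrow> ('a \<Rightarrow> real) set" where
  "kernel_directions P = {w. (\<Sum>a\<in>UNIV. w a) = 0 \<and> (\<forall>b. mat_vec P w b = 0)}"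

lemma kernel_directions_closed:
  "\<forall>u\<in>kernel_directions P. \<forall>w\<in>kernel_directions P. \<forall>t. (\<lambda>b. u b - t * w b) \<in> kernel_directions P"
  by (simp add: kernel_directions_def mat_vec_diff mat_vec_scale sum_subtractf sum_distrib_left[symmetric])

lemma kernel_simplex_diff:
  assumes "p \<in> kernel_simplex P" "q \<in> kernel_simplex P"
  shows "(\<lambda>b. p b - q b) \<in> kernel_directions P"
  using assms
  by (simp add: kernel_simplex_def prob_simplex_def kernel_directions_def mat_vec_diff sum_subtractf)

lemma sign_conformal_step:
  fixes c s :: "'a::finite \<Rightarrow> real"
  assumes "sign_conformal c s"
  obtains t where "0 < t" "\<And>b. 0 \<le> c b * (s b - t * c b)"
proof -
  define B where "B = {b. c b \<noteq> 0}"
  define t where "t = Min (insert 1 ((\<lambda>b. \<bar>s b\<bar> / \<bar>c b\<bar>) ` B))"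
  have conf: "0 < c b * s b" if "b \<in> B" for b
    using assms that by (simp add: sign_conformal_def B_def)
  then have "s b \<noteq> 0" if "b \<in> B" for b
    using that by fastforce
  then have "0 < t"
    unfolding t_def by (subst Min_gr_iff) (auto simp: B_def)
  moreover have "0 \<le> c b * (s b - t * c b)" for b
  proof (cases "b \<in> B")
    case True
    have "t \<le> \<bar>s b\<bar> / \<bar>c b\<bar>" unfolding t_def using True by (intro Min_le) auto
    then have "t * \<bar>c b\<bar> \<le> \<bar>s b\<bar>" using True by (simp add: B_def field_simps)
    moreover have "c b * (s b - t * c b) = \<bar>c b\<bar> * (\<bar>s b\<bar> - t * \<bar>c b\<bar>)"
      using conf[OF True] by (simp add: algebra_simps abs_mult[symmetric] abs_mult_self_eq)
    ultimately show ?thesis by simp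
  qed (simp add: B_def)
  ultimately show thesis by (rule that)
qed

lemma kl_term_diff_gt:
  assumes "0 \<le> y" "0 < z" "0 < x" "y \<noteq> z" "0 \<le> (z - x) * (y - z)"
  shows "y - z < kl_term x y - kl_term x z"
proof -
  have "0 \<le> ln (z / x) * (y - z)"
  proof -
    consider "x < z" | "x = z" | "z < x" by linarith
    then show ?thesis
    proof cases
      case 1
      then have "0 \<le> y - z" using assms(5) by (simp add: zero_le_mult_iff)
      moreover have "0 \<le> ln (z / x)" using 1 assms by simp
      ultimately show ?thesis by simp
    next
      case 3
      then have "y - z \<le> 0" using assms(5) by (simp add: zero_le_mult_iff)
      moreover have "ln (z / x) \<le> 0" using 3 assms by simp
      ultimately show ?thesis by (simp add: mult_nonpos_nonpos)
    qed simp
  qed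
  then show ?thesis
    using kl_term_gt_tangent[OF assms(1-4)] by (simp add: algebra_simps)
qed

lemma conformal_step_pos:
  fixes x p t c :: real
  assumes "0 < x" "0 \<le> p" "0 < t" "0 \<le> c * (p - x - t * c)" "c \<noteq> 0"
  shows "0 < p - t * c"
proof (cases "0 < c")
  case True
  then have "0 \<le> p - x - t * c" using assms(4) by (simp add: zero_le_mult_iff)
  then show ?thesis using assms(1) by linarith
next
  case False
  then have "t * c < 0" using assms(3,5) by (simp add: mult_pos_neg)
  then show ?thesis using assms(2) by simp
qed

lemma KL_conformal_step_less:
  assumes x_pos: "\<forall>a. 0 < x a" and p_nonneg: "\<And>b. 0 \<le> p b" and "0 < t"
    and no_overshoot: "\<And>b. 0 \<le> c b * (p b - x b - t * c b)"
    and "(\<Sum>b\<in>UNIV. c b) = 0" "c b0 \<noteq> 0"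
  shows "KL (\<lambda>b. p b - t * c b) x < KL p x"
proof -
  define z where "z = (\<lambda>b. p b - t * c b)"
  have gain: "t * c b < kl_term (x b) (p b) - kl_term (x b) (z b)" if "c b \<noteq> 0" for b
  proof -
    have "(z b - x b) * (p b - z b) = t * (c b * (p b - x b - t * c b))"
      by (simp add: z_def algebra_simps)
    then have "0 \<le> (z b - x b) * (p b - z b)"
      using \<open>0 < t\<close> no_overshoot[of b] by simp
    moreover have "p b \<noteq> z b" "0 < z b"
      using that \<open>0 < t\<close> conformal_step_pos[of "x b" "p b" t "c b"] x_pos p_nonneg no_overshoot
      by (auto simp: z_def)
    ultimately have "p b - z b < kl_term (x b) (p b) - kl_term (x b) (z b)"
      using kl_term_diff_gt p_nonneg x_pos by blast
    then show ?thesis by (simp add: z_def)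
  qed
  have "(\<Sum>b\<in>UNIV. t * c b) < (\<Sum>b\<in>UNIV. kl_term (x b) (p b) - kl_term (x b) (z b))"
  proof (rule sum_strict_mono_ex1)
    show "\<forall>b\<in>UNIV. t * c b \<le> kl_term (x b) (p b) - kl_term (x b) (z b)"
    proof
      fix b
      show "t * c b \<le> kl_term (x b) (p b) - kl_term (x b) (z b)"
        using gain[of b] by (cases "c b = 0") (simp_all add: z_def)
    qed
    show "\<exists>b\<in>UNIV. t * c b < kl_term (x b) (p b) - kl_term (x b) (z b)"
      using gain \<open>c b0 \<noteq> 0\<close> by blast
  qed simp
  moreover have "(\<Sum>b\<in>UNIV. t * c b) = 0"
    using \<open>(\<Sum>b\<in>UNIV. c b) = 0\<close> by (simp flip: sum_distrib_left)
  ultimately show ?thesis by (simp add: z_def KL_eq_sum_kl_term sum_subtractf)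
qed

lemma KL_argmin_conformal_free:
  assumes x_pos: "\<forall>a. 0 < x a"
    and p: "p \<in> kernel_simplex P" "\<forall>\<nu>\<in>kernel_simplex P. KL p x \<le> KL \<nu> x"
  shows "conformal_free (kernel_directions P) (\<lambda>b. p b - x b)"
  unfolding conformal_free_def
proof (intro ballI impI, rule ccontr)
  fix c assume c: "c \<in> kernel_directions P" "sign_conformal c (\<lambda>b. p b - x b)"
    and "\<not> (\<forall>b. c b = 0)"
  then obtain b0 where "c b0 \<noteq> 0" by blast
  obtain t where "0 < t" and no_overshoot: "\<And>b. 0 \<le> c b * (p b - x b - t * c b)"
    using sign_conformal_step[OF c(2)] by blast
  have p_nonneg: "0 \<le> p b" for b using p(1) by (simp add: kernel_simplex_def prob_simplex_def)
  have "0 \<le> p b - t * c b" for b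
    using conformal_step_pos[of "x b" "p b" t "c b"] x_pos p_nonneg \<open>0 < t\<close> no_overshoot
    by (cases "c b = 0") auto
  then have "(\<lambda>b. p b - t * c b) \<in> kernel_simplex P"
    using p(1) c(1)
    by (simp add: kernel_simplex_def prob_simplex_def kernel_directions_def
        mat_vec_diff mat_vec_scale sum_subtractf sum_distrib_left[symmetric])
  moreover have "KL (\<lambda>b. p b - t * c b) x < KL p x"
    using c(1) by (intro KL_conformal_step_less[OF x_pos p_nonneg \<open>0 < t\<close> no_overshoot _ \<open>c b0 \<noteq> 0\<close>])
      (simp add: kernel_directions_def)
  ultimately show False using p(2) by force
qed

section \<open>A Hoffman bound for sign-conformally free vectors\<close>

lemma not_sign_conformal_diff:
  assumes "\<not> sign_conformal d (\<lambda>b. d b - e b)"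
  obtains a where "d a \<noteq> 0" "\<bar>d a\<bar> \<le> \<bar>e a\<bar>"
proof -
  from assms obtain a where "d a \<noteq> 0" and "d a * (d a - e a) \<le> 0"
    by (auto simp: sign_conformal_def not_less)
  moreover have "\<bar>d a\<bar> * (\<bar>d a\<bar> - \<bar>e a\<bar>) \<le> d a * (d a - e a)"
    by (simp add: algebra_simps abs_mult_self_eq abs_mult[symmetric])
  ultimately have "\<bar>d a\<bar> * (\<bar>d a\<bar> - \<bar>e a\<bar>) \<le> 0" "0 < \<bar>d a\<bar>" by simp_all
  then have "\<bar>d a\<bar> \<le> \<bar>e a\<bar>" by (simp add: mult_le_0_iff)
  with \<open>d a \<noteq> 0\<close> show thesis by (rule that)
qed

definition conformally_bounded :: "('a::finite \<Rightarrow> real) set \<Rightarrow> real \<Rightarrow> bool" where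
  "conformally_bounded V C \<longleftrightarrow>
     (\<forall>d\<in>V. \<forall>e. conformal_free V (\<lambda>b. d b - e b) \<longrightarrow> norm_one d \<le> C * norm_one e)"

lemma conformal_free_subset: "W \<subseteq> V \<Longrightarrow> conformal_free V s \<Longrightarrow> conformal_free W s"
  by (auto simp: conformal_free_def)

lemma conformally_bounded_reduce:
  assumes closed: "\<forall>u\<in>V. \<forall>w\<in>V. \<forall>t. (\<lambda>b. u b - t * w b) \<in> V"
    and w: "w \<in> V" "w a = 1"
    and bound: "conformally_bounded {v \<in> V. v a = 0} C" "0 \<le> C"
    and d: "d \<in> V" "conformal_free V (\<lambda>b. d b - e b)" "\<bar>d a\<bar> \<le> \<bar>e a\<bar>"
  shows "norm_one d \<le> (C * (1 + norm_one w) + norm_one w) * norm_one e"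
proof -
  define d' where "d' = (\<lambda>b. d b - d a * w b)"
  define e' where "e' = (\<lambda>b. e b - d a * w b)"
  have "d' \<in> {v \<in> V. v a = 0}" using closed d(1) w by (simp add: d'_def)
  moreover have "conformal_free {v \<in> V. v a = 0} (\<lambda>b. d' b - e' b)"
    using conformal_free_subset[OF _ d(2)] by (simp add: d'_def e'_def)
  ultimately have "norm_one d' \<le> C * norm_one e'"
    using bound(1) unfolding conformally_bounded_def by blast
  have "norm_one (\<lambda>b. d a * w b) = \<bar>d a\<bar> * norm_one w" by (rule norm_one_scale)
  also have "\<dots> \<le> norm_one e * norm_one w"
    using d(3) abs_le_norm_one[of e a] norm_one_nonneg[of w] by (intro mult_right_mono) auto
  finally have shift: "norm_one (\<lambda>b. d a * w b) \<le> norm_one e * norm_one w" .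
  have "norm_one e' \<le> norm_one e * (1 + norm_one w)"
    using norm_one_diff_le[of e "\<lambda>b. d a * w b"] shift by (simp add: e'_def algebra_simps)
  have "norm_one d \<le> norm_one d' + norm_one (\<lambda>b. d a * w b)"
    using norm_one_add_le[of d' "\<lambda>b. d a * w b"] by (simp add: d'_def)
  also have "\<dots> \<le> C * norm_one e' + norm_one e * norm_one w"
    using \<open>norm_one d' \<le> C * norm_one e'\<close> shift by linarith
  also have "\<dots> \<le> C * (norm_one e * (1 + norm_one w)) + norm_one e * norm_one w"
    using \<open>norm_one e' \<le> norm_one e * (1 + norm_one w)\<close> bound(2)
    by (intro add_right_mono mult_left_mono)
  finally show ?thesis by (simp add: algebra_simps)
qed

lemma conformally_bounded_sum:
  fixes V :: "('a::finite \<Rightarrow> real) set"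
  assumes "\<forall>a\<in>A. 0 \<le> K a \<and> (\<forall>d\<in>V. \<forall>e. conformal_free V (\<lambda>b. d b - e b) \<longrightarrow>
      \<bar>d a\<bar> \<le> \<bar>e a\<bar> \<longrightarrow> norm_one d \<le> K a * norm_one e)"
    and "\<forall>v\<in>V. \<forall>a. v a \<noteq> 0 \<longrightarrow> a \<in> A"
  shows "conformally_bounded V (sum K A)"
  unfolding conformally_bounded_def
proof (intro ballI allI impI)
  fix d e assume d: "d \<in> V" "conformal_free V (\<lambda>b. d b - e b)"
  show "norm_one d \<le> sum K A * norm_one e"
  proof (cases "sign_conformal d (\<lambda>b. d b - e b)")
    case True
    then have "\<forall>b. d b = 0" using d unfolding conformal_free_def by blast
    then have "norm_one d = 0" by (simp add: norm_one_def)
    then show ?thesis using assms(1) norm_one_nonneg[of e] by (simp add: sum_nonneg)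
  next
    case False
    then obtain a where "d a \<noteq> 0" "\<bar>d a\<bar> \<le> \<bar>e a\<bar>" by (rule not_sign_conformal_diff)
    then have "a \<in> A" using d(1) assms(2) by blast
    then have "norm_one d \<le> K a * norm_one e"
      using assms(1) d \<open>\<bar>d a\<bar> \<le> \<bar>e a\<bar>\<close> by blast
    also have "\<dots> \<le> sum K A * norm_one e"
      using \<open>a \<in> A\<close> assms(1) norm_one_nonneg[of e]
      by (intro mult_right_mono member_le_sum) auto
    finally show ?thesis .
  qed
qed

lemma conformally_bounded_exists:
  fixes V :: "('a::finite \<Rightarrow> real) set"
  assumes "\<forall>u\<in>V. \<forall>w\<in>V. \<forall>t. (\<lambda>b. u b - t * w b) \<in> V"
  shows "\<exists>C\<ge>0. conformally_bounded V C"
  using assms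
proof (induction "card {a. \<exists>v\<in>V. v a \<noteq> 0}" arbitrary: V rule: less_induct)
  case less
  define A where "A = {a. \<exists>v\<in>V. v a \<noteq> 0}"
  have "\<forall>a\<in>A. \<exists>K\<ge>0. \<forall>d\<in>V. \<forall>e. conformal_free V (\<lambda>b. d b - e b) \<longrightarrow> \<bar>d a\<bar> \<le> \<bar>e a\<bar> \<longrightarrow>
      norm_one d \<le> K * norm_one e"
  proof
    fix a assume a: "a \<in> A"
    obtain v where "v \<in> V" "v a \<noteq> 0" using a by (auto simp: A_def)
    define w where "w = (\<lambda>b. v b - (1 - 1 / v a) * v b)"
    have "w \<in> V" using less.prems \<open>v \<in> V\<close> unfolding w_def by blast
    have "w a = 1" using \<open>v a \<noteq> 0\<close> by (simp add: w_def algebra_simps)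
    have "{b. \<exists>v\<in>{v \<in> V. v a = 0}. v b \<noteq> 0} \<subset> A"
      using a by (auto simp: A_def)
    then have smaller: "card {b. \<exists>v\<in>{v \<in> V. v a = 0}. v b \<noteq> 0} < card {a. \<exists>v\<in>V. v a \<noteq> 0}"
      unfolding A_def by (simp add: psubset_card_mono)
    have closed: "\<forall>u\<in>{v \<in> V. v a = 0}. \<forall>u'\<in>{v \<in> V. v a = 0}. \<forall>t. (\<lambda>b. u b - t * u' b) \<in> {v \<in> V. v a = 0}"
      using less.prems by simp
    obtain C where C: "conformally_bounded {v \<in> V. v a = 0} C" "0 \<le> C"
      using less.hyps[OF smaller closed] by blast
    show "\<exists>K\<ge>0. \<forall>d\<in>V. \<forall>e. conformal_free V (\<lambda>b. d b - e b) \<longrightarrow> \<bar>d a\<bar> \<le> \<bar>e a\<bar> \<longrightarrow>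
      norm_one d \<le> K * norm_one e"
    proof (intro exI[of _ "C * (1 + norm_one w) + norm_one w"] conjI ballI allI impI)
      show "0 \<le> C * (1 + norm_one w) + norm_one w"
        using C(2) norm_one_nonneg[of w] by simp
      fix d e assume "d \<in> V" "conformal_free V (\<lambda>b. d b - e b)" "\<bar>d a\<bar> \<le> \<bar>e a\<bar>"
      then show "norm_one d \<le> (C * (1 + norm_one w) + norm_one w) * norm_one e"
        by (rule conformally_bounded_reduce[OF less.prems \<open>w \<in> V\<close> \<open>w a = 1\<close> C])
    qed
  qed
  then obtain K where K: "\<forall>a\<in>A. 0 \<le> K a \<and> (\<forall>d\<in>V. \<forall>e. conformal_free V (\<lambda>b. d b - e b) \<longrightarrow>
      \<bar>d a\<bar> \<le> \<bar>e a\<bar> \<longrightarrow> norm_one d \<le> K a * norm_one e)"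
    by (rule bchoice[THEN exE]) blast
  have "conformally_bounded V (sum K A)"
    using K by (rule conformally_bounded_sum) (auto simp: A_def)
  moreover have "0 \<le> sum K A" using K by (simp add: sum_nonneg)
  ultimately show ?case by blast
qed

section \<open>Distance to the equilibria\<close>

lemma mat_vec_bounded_preimage:
  fixes P :: "'a::finite \<Rightarrow> 'a \<Rightarrow> real"
  obtains C where "0 \<le> C"
    "\<And>s. \<exists>y. (\<forall>b. mat_vec P y b = mat_vec P s b) \<and> norm_one y \<le> C * norm_inf (mat_vec P s)"
proof -
  define M where "M = (\<chi> i j. P i j :: real^'a^'a)"
  obtain g where g: "linear g" "\<And>v. M *v (g (M *v v)) = M *v v"
    using linear_exists_right_inverse_on[OF matrix_vector_mul_linear[of M] subspace_UNIV] by blast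
  obtain B where B: "0 < B" "\<And>v. norm (g v) \<le> B * norm v"
    using linear_bounded_pos[OF g(1)] by blast
  define n where "n = real CARD('a)"
  show ?thesis
  proof (rule that[of "n * B * n"])
    show "0 \<le> n * B * n" using B(1) by (simp add: n_def)
    fix s :: "'a \<Rightarrow> real"
    define v where "v = M *v (\<chi> j. s j)"
    have "mat_vec P (\<lambda>b. g v $ b) b = mat_vec P s b" for b
      using g(2)[of "\<chi> j. s j"] by (simp add: mat_vec_eq_matrix_vector_mult v_def flip: M_def)
    moreover have "norm_one (\<lambda>b. g v $ b) \<le> n * B * n * norm_inf (mat_vec P s)"
    proof -
      have "norm_one (\<lambda>b. g v $ b) \<le> n * norm (g v)"
        using norm_one_le_card_norm[of "g v"] by (simp add: n_def)
      also have "\<dots> \<le> n * (B * norm v)"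
        using B(2)[of v] by (simp add: n_def mult_left_mono)
      also have "norm v \<le> norm_one (mat_vec P s)"
        using norm_le_norm_one[of "mat_vec P s"]
        by (simp add: v_def M_def mat_vec_eq_matrix_vector_mult vec_lambda_eta)
      also have "\<dots> \<le> n * norm_inf (mat_vec P s)"
        unfolding n_def by (rule norm_one_le_card_norm_inf)
      finally show ?thesis using B(1) by (simp add: n_def mult_left_mono mult.assoc)
    qed
    ultimately show "\<exists>y. (\<forall>b. mat_vec P y b = mat_vec P s b) \<and> norm_one y \<le> n * B * n * norm_inf (mat_vec P s)"
      by blast
  qed
qed

lemma norm_one_renormalize_le:
  assumes "x \<in> prob_simplex" "\<And>b. x b \<le> r b"
  shows "norm_one (\<lambda>b. x b - r b / (\<Sum>a\<in>UNIV. r a)) \<le> 2 * ((\<Sum>a\<in>UNIV. r a) - 1)"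
proof -
  define T where "T = (\<Sum>a\<in>UNIV. r a)"
  have x: "\<And>b. 0 \<le> x b" "(\<Sum>b\<in>UNIV. x b) = 1" using assms(1) by (auto simp: prob_simplex_def)
  have r: "0 \<le> r b" for b using x(1)[of b] assms(2)[of b] by linarith
  have "T - 1 = (\<Sum>b\<in>UNIV. r b - x b)" using x(2) by (simp add: T_def sum_subtractf)
  also have "\<dots> = norm_one (\<lambda>b. x b - r b)"
    unfolding norm_one_def using assms(2) by (intro sum.cong) auto
  finally have xr: "norm_one (\<lambda>b. x b - r b) = T - 1" ..
  then have "1 \<le> T" using norm_one_nonneg[of "\<lambda>b. x b - r b"] by linarith
  have "\<bar>r b - r b / T\<bar> = r b * (1 - 1 / T)" for b
  proof -
    have "r b - r b / T = r b * (1 - 1 / T)" by (simp add: algebra_simps)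
    moreover have "0 \<le> r b * (1 - 1 / T)" using r[of b] \<open>1 \<le> T\<close> by simp
    ultimately show ?thesis by simp
  qed
  then have "norm_one (\<lambda>b. r b - r b / T) = (\<Sum>b\<in>UNIV. r b * (1 - 1 / T))"
    by (simp add: norm_one_def)
  also have "\<dots> = T - 1"
    using \<open>1 \<le> T\<close> by (simp add: T_def flip: sum_distrib_right) (simp add: algebra_simps)
  finally have rq: "norm_one (\<lambda>b. r b - r b / T) = T - 1" .
  have "norm_one (\<lambda>b. x b - r b / T) \<le> norm_one (\<lambda>b. x b - r b) + norm_one (\<lambda>b. r b - r b / T)"
    using norm_one_add_le[of "\<lambda>b. x b - r b" "\<lambda>b. r b - r b / T"] by simp
  then show ?thesis using xr rq by (simp add: T_def)
qed

lemma kernel_simplex_dist_le_preimage: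
  assumes \<pi>: "\<pi> \<in> kernel_simplex P" "0 < m" "\<And>a. m \<le> \<pi> a"
    and x: "x \<in> prob_simplex" and y: "\<And>b. mat_vec P y b = mat_vec P x b"
  shows "\<exists>q\<in>kernel_simplex P. norm_one (\<lambda>a. x a - q a) \<le> 2 * (1 + 1 / m) * norm_one y"
proof -
  \<comment> \<open>\<open>x - y\<close> lies in the kernel of \<open>P\<close>; adding \<open>\<sigma> \<pi>\<close> makes it dominate \<open>x\<close>\<close>
  define \<sigma> where "\<sigma> = norm_one y / m"
  define r where "r = (\<lambda>b. x b - y b + \<sigma> * \<pi> b)"
  define T where "T = (\<Sum>b\<in>UNIV. r b)"
  have "0 \<le> \<sigma>" using \<open>0 < m\<close> norm_one_nonneg[of y] by (simp add: \<sigma>_def)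
  have x_le_r: "x b \<le> r b" for b
  proof -
    have "y b \<le> norm_one y" using abs_le_norm_one[of y b] by simp
    also have "norm_one y = \<sigma> * m" using \<open>0 < m\<close> by (simp add: \<sigma>_def)
    also have "\<dots> \<le> \<sigma> * \<pi> b"
      using \<pi>(3)[of b] \<open>0 \<le> \<sigma>\<close> by (rule mult_left_mono)
    finally show ?thesis by (simp add: r_def)
  qed
  have x_simplex: "\<And>b. 0 \<le> x b" "(\<Sum>b\<in>UNIV. x b) = 1" using x by (auto simp: prob_simplex_def)
  have T_eq: "T = 1 - (\<Sum>b\<in>UNIV. y b) + \<sigma>"
    using \<pi>(1) x_simplex(2)
    by (simp add: T_def r_def sum.distrib sum_subtractf kernel_simplex_def prob_simplex_def
        flip: sum_distrib_left)
  have "1 \<le> T" unfolding T_def using x_simplex(2) x_le_r by (metis sum_mono)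
  have "- (\<Sum>b\<in>UNIV. y b) \<le> norm_one y"
    unfolding norm_one_def by (metis abs_ge_minus_self order_trans sum_abs)
  then have T_le: "T - 1 \<le> (1 + 1 / m) * norm_one y" by (simp add: T_eq \<sigma>_def algebra_simps)
  have "(\<lambda>b. r b / T) \<in> kernel_simplex P"
  proof -
    have "0 \<le> r b / T" for b using x_simplex(1)[of b] x_le_r[of b] \<open>1 \<le> T\<close> by simp
    moreover have "(\<Sum>b\<in>UNIV. r b / T) = 1" using \<open>1 \<le> T\<close> by (simp add: T_def flip: sum_divide_distrib)
    moreover have "mat_vec P r b = 0" for b
      using \<pi>(1) y[of b] by (simp add: r_def mat_vec_add mat_vec_diff mat_vec_scale kernel_simplex_def)
    ultimately show ?thesis by (simp add: kernel_simplex_def prob_simplex_def mat_vec_divide)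
  qed
  moreover have "norm_one (\<lambda>a. x a - r a / T) \<le> 2 * (T - 1)"
    using norm_one_renormalize_le[OF x x_le_r] by (simp add: T_def)
  moreover have "2 * (T - 1) \<le> 2 * (1 + 1 / m) * norm_one y"
    unfolding mult.assoc by (rule mult_left_mono[OF T_le]) simp
  ultimately show ?thesis by (meson order_trans)
qed

lemma kernel_simplex_error_bound:
  fixes P :: "'a::finite \<Rightarrow> 'a \<Rightarrow> real"
  assumes "\<pi> \<in> kernel_simplex P" "\<And>a. 0 < \<pi> a"
  obtains C where "0 \<le> C"
    "\<And>x. x \<in> prob_simplex \<Longrightarrow>
       \<exists>q\<in>kernel_simplex P. norm_one (\<lambda>a. x a - q a) \<le> C * norm_inf (mat_vec P x)"
proof -
  define m where "m = Min (range \<pi>)"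
  have "0 < m" unfolding m_def using assms(2) by (subst Min_gr_iff) auto
  have "m \<le> \<pi> a" for a unfolding m_def by (rule Min_le) auto
  obtain C where C: "0 \<le> C"
    "\<And>s. \<exists>y. (\<forall>b. mat_vec P y b = mat_vec P s b) \<and> norm_one y \<le> C * norm_inf (mat_vec P s)"
    using mat_vec_bounded_preimage by blast
  show thesis
  proof (rule that)
    show "0 \<le> 2 * (1 + 1 / m) * C" using \<open>0 < m\<close> C(1) by simp
    fix x :: "'a \<Rightarrow> real" assume "x \<in> prob_simplex"
    obtain y where y: "\<And>b. mat_vec P y b = mat_vec P x b" "norm_one y \<le> C * norm_inf (mat_vec P x)"
      using C(2) by blast
    obtain q where "q \<in> kernel_simplex P" and "norm_one (\<lambda>a. x a - q a) \<le> 2 * (1 + 1 / m) * norm_one y"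
      using kernel_simplex_dist_le_preimage[OF assms(1) \<open>0 < m\<close> \<open>\<And>a. m \<le> \<pi> a\<close> \<open>x \<in> prob_simplex\<close> y(1)]
      by blast
    moreover have "2 * (1 + 1 / m) * norm_one y \<le> 2 * (1 + 1 / m) * (C * norm_inf (mat_vec P x))"
      using y(2) \<open>0 < m\<close> by (intro mult_left_mono) auto
    ultimately show "\<exists>q\<in>kernel_simplex P. norm_one (\<lambda>a. x a - q a) \<le> 2 * (1 + 1 / m) * C * norm_inf (mat_vec P x)"
      unfolding mult.assoc by force
  qed
qed

lemma kl_proj_error_bound:
  fixes P :: "'a::finite \<Rightarrow> 'a \<Rightarrow> real"
  assumes skew: "skew_symmetric P" and fs: "full_support P"
  obtains K where "0 \<le> K"
    "\<And>x. x \<in> prob_simplex \<Longrightarrow> \<forall>a. 0 < x a \<Longrightarrow>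
       norm_one (\<lambda>a. x a - kl_proj P x a) \<le> K * norm_inf (mat_vec P x)"
proof -
  obtain \<pi> where "\<pi> \<in> nash_set P" "\<And>a. 0 < \<pi> a"
    using full_support_positive_equilibrium[OF fs] by blast
  then have "\<pi> \<in> kernel_simplex P" using nash_set_eq_kernel_simplex[OF skew fs] by simp
  then obtain C where C: "0 \<le> C"
    "\<And>x. x \<in> prob_simplex \<Longrightarrow>
       \<exists>q\<in>kernel_simplex P. norm_one (\<lambda>a. x a - q a) \<le> C * norm_inf (mat_vec P x)"
    using kernel_simplex_error_bound \<open>\<And>a. 0 < \<pi> a\<close> by blast
  obtain D where D: "0 \<le> D" "conformally_bounded (kernel_directions P) D"
    using conformally_bounded_exists[OF kernel_directions_closed] by blast
  show thesis
  proof (rule that)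
    show "0 \<le> (1 + D) * C" using C(1) D(1) by simp
    fix x :: "'a \<Rightarrow> real" assume x: "x \<in> prob_simplex" "\<forall>a. 0 < x a"
    define p where "p = kl_proj P x"
    obtain q where q: "q \<in> kernel_simplex P" "norm_one (\<lambda>a. x a - q a) \<le> C * norm_inf (mat_vec P x)"
      using C(2)[OF x(1)] by blast
    have "conformal_free (kernel_directions P) (\<lambda>b. p b - x b)"
      using KL_argmin_conformal_free[OF x(2) kl_proj_argmin[OF skew fs x(2)]] by (simp add: p_def)
    moreover have "(\<lambda>b. p b - q b) \<in> kernel_directions P"
      using kernel_simplex_diff kl_proj_argmin(1)[OF skew fs x(2)] q(1) by (simp add: p_def)
    ultimately have pq: "norm_one (\<lambda>b. p b - q b) \<le> D * norm_one (\<lambda>a. x a - q a)"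
      using D(2) unfolding conformally_bounded_def by fastforce
    have "norm_one (\<lambda>a. x a - p a) \<le> norm_one (\<lambda>a. x a - q a) + norm_one (\<lambda>b. p b - q b)"
      using norm_one_diff_le[of "\<lambda>a. x a - q a" "\<lambda>b. p b - q b"] by simp
    also have "\<dots> \<le> (1 + D) * norm_one (\<lambda>a. x a - q a)"
      using pq by (simp add: algebra_simps)
    also have "\<dots> \<le> (1 + D) * (C * norm_inf (mat_vec P x))"
      using q(2) D(1) by (simp add: mult_left_mono)
    finally show "norm_one (\<lambda>a. x a - kl_proj P x a) \<le> (1 + D) * C * norm_inf (mat_vec P x)"
      by (simp add: p_def mult.assoc)
  qed
qed

theorem mainTheorem7:
  fixes P :: "'a::finite \<Rightarrow> 'a \<Rightarrow> real"
  assumes "skew_symmetric P"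
    and "full_support P"
  shows "\<exists>c>0. \<forall>x\<in>prob_simplex. (\<forall>a. x a > 0) \<longrightarrow>
        norm_inf (mat_vec P x) \<ge> c * norm_one (\<lambda>a. x a - kl_proj P x a)"
proof -
  obtain K where K: "0 \<le> K"
    "\<And>x. x \<in> prob_simplex \<Longrightarrow> \<forall>a. 0 < x a \<Longrightarrow>
       norm_one (\<lambda>a. x a - kl_proj P x a) \<le> K * norm_inf (mat_vec P x)"
    using kl_proj_error_bound[OF assms] by blast
  show ?thesis
  proof (intro exI[of _ "1 / (K + 1)"] conjI ballI impI)
    show "0 < 1 / (K + 1)" using K(1) by simp
    fix x :: "'a \<Rightarrow> real" assume "x \<in> prob_simplex" "\<forall>a. 0 < x a"
    then have "norm_one (\<lambda>a. x a - kl_proj P x a) \<le> K * norm_inf (mat_vec P x)" by (rule K(2))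
    also have "\<dots> \<le> (K + 1) * norm_inf (mat_vec P x)"
      using norm_inf_nonneg[of "mat_vec P x"] by (simp add: distrib_right)
    finally show "1 / (K + 1) * norm_one (\<lambda>a. x a - kl_proj P x a) \<le> norm_inf (mat_vec P x)"
      using K(1) by (simp add: field_simps)
  qed
qed

end
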